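(* Let $d > 0$ and let $$S_d^* \in \arg\max_{S \subseteq V:\ |S| \le k,\ \mathrm{div}(S) \ge d} g(S)$$ (assume this feasible family is nonempty). Let $T$ be an output of $\mathrm{GreedyIndependentSet}(V,g,d',k)$ with $0 \le d' < d/2$. Then $g(T) \ge \tfrac{1}{2}\, g(S_d^* )$.
   Context: Let $V$ be a finite set of $n$ points in a metric space with metric $\mathrm{dist}$, and let $d_{\max} = \max_{u,v \in V}\mathrm{dist}(u,v)$. For $u \in V$ and $S \subseteq V$ let $\mathrm{dist}(u,S) = \min_{v \in S}\mathrm{dist}(u,v)$, with $\mathrm{dist}(u,\emptyset) = \infty$. The max-min diversity is $\mathrm{div}(S) = \min_{u,v \in S,\, u \ne v}\mathrm{dist}(u,v)$ if $|S| \ge 2$, and $\mathrm{div}(S) = d_{\max}$ if $|S| \le 1$. Let $g : 2^V \to \mathbb{R}_{\ge 0}$ be a nonnegative monotone submodular function and $k \ge 1$ an integer. $\mathrm{GreedyIndependentSet}(V,g,d,k)$: initialize $S \gets \emptyset$; for $i = 1,\dots,k$: let $C = \{v \in V\setminus S : \mathrm{dist}(v,S) \ge d\}$; if $C = \emptyset$ return $S$; otherwise pick $t \in \arg\max_{v \in C} \big(g(S\cup\{v\}) - g(S)\big)$ (ties broken arbitrarily) and set $S \gets S \cup\{t\}$. After the loop, return $S$. *)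

theory Defs
  imports "HOL-Library.Extended_Real"
begin

definition metric_on :: "'a set \<Rightarrow> ('a \<Rightarrow> 'a \<Rightarrow> real) \<Rightarrow> bool" where
  "metric_on V dst \<longleftrightarrow>
     (\<forall>u\<in>V. \<forall>v\<in>V. dst u v \<ge> 0) \<and>
     (\<forall>u\<in>V. \<forall>v\<in>V. dst u v = 0 \<longleftrightarrow> u = v) \<and>
     (\<forall>u\<in>V. \<forall>v\<in>V. dst u v = dst v u) \<and>
     (\<forall>u\<in>V. \<forall>v\<in>V. \<forall>w\<in>V. dst u w \<le> dst u v + dst v w)"

text \<open>dist(u,S) = min over S, with dist(u,{}) = infinity.\<close>
definition dist_set :: "('a \<Rightarrow> 'a \<Rightarrow> real) \<Rightarrow> 'a \<Rightarrow> 'a set \<Rightarrow> ereal" where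
  "dist_set dst u S = Inf ((\<lambda>v. ereal (dst u v)) ` S)"

definition dmax :: "'a set \<Rightarrow> ('a \<Rightarrow> 'a \<Rightarrow> real) \<Rightarrow> real" where
  "dmax V dst = Max {dst u v | u v. u \<in> V \<and> v \<in> V}"

definition diversity :: "'a set \<Rightarrow> ('a \<Rightarrow> 'a \<Rightarrow> real) \<Rightarrow> 'a set \<Rightarrow> real" where
  "diversity V dst S =
     (if card S \<ge> 2 then Min {dst u v | u v. u \<in> S \<and> v \<in> S \<and> u \<noteq> v}
      else dmax V dst)"

definition nonneg_set_fun :: "'a set \<Rightarrow> ('a set \<Rightarrow> real) \<Rightarrow> bool" where
  "nonneg_set_fun V g \<longleftrightarrow> (\<forall>S. S \<subseteq> V \<longrightarrow> g S \<ge> 0)"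

definition monotone_set_fun :: "'a set \<Rightarrow> ('a set \<Rightarrow> real) \<Rightarrow> bool" where
  "monotone_set_fun V g \<longleftrightarrow> (\<forall>A B. A \<subseteq> B \<and> B \<subseteq> V \<longrightarrow> g A \<le> g B)"

definition submodular :: "'a set \<Rightarrow> ('a set \<Rightarrow> real) \<Rightarrow> bool" where
  "submodular V g \<longleftrightarrow> (\<forall>A B x. A \<subseteq> B \<and> B \<subseteq> V \<and> x \<in> V - B \<longrightarrow>
      g (B \<union> {x}) - g B \<le> g (A \<union> {x}) - g A)"

definition cands :: "'a set \<Rightarrow> ('a \<Rightarrow> 'a \<Rightarrow> real) \<Rightarrow> real \<Rightarrow> 'a set \<Rightarrow> 'a set" where
  "cands V dst d S = {v \<in> V - S. dist_set dst v S \<ge> ereal d}"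

text \<open>greedy_reach ... i S: S is a possible value of the set after i iterations
  (all tie-breaking choices allowed).\<close>
inductive greedy_reach ::
  "'a set \<Rightarrow> ('a set \<Rightarrow> real) \<Rightarrow> ('a \<Rightarrow> 'a \<Rightarrow> real) \<Rightarrow> real \<Rightarrow> nat \<Rightarrow> nat \<Rightarrow> 'a set \<Rightarrow> bool"
  for V g dst d k where
  start: "greedy_reach V g dst d k 0 {}"
| step: "\<lbrakk> greedy_reach V g dst d k i S; i < k; t \<in> cands V dst d S;
           \<forall>v\<in>cands V dst d S. g (S \<union> {v}) - g S \<le> g (S \<union> {t}) - g S \<rbrakk>
         \<Longrightarrow> greedy_reach V g dst d k (Suc i) (S \<union> {t})"

text \<open>T is a possible output of GreedyIndependentSet(V,g,d,k): either the loop ran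
  all k iterations, or it returned early because the candidate set was empty.\<close>
definition greedy_output ::
  "'a set \<Rightarrow> ('a set \<Rightarrow> real) \<Rightarrow> ('a \<Rightarrow> 'a \<Rightarrow> real) \<Rightarrow> real \<Rightarrow> nat \<Rightarrow> 'a set \<Rightarrow> bool" where
  "greedy_output V g dst d k T \<longleftrightarrow>
     (\<exists>i. greedy_reach V g dst d k i T \<and> (i = k \<or> (i < k \<and> cands V dst d T = {})))"

end

theory Submission
  imports Defs
begin

text \<open>Call a point of the optimum Opt blocked once it is neither chosen nor a candidate any more.
  Since points of Opt are more than 2d' apart, a greedy step (with threshold d') blocks at most
  one new point, and that point was a candidate just before, so its marginal gain is at most
  the gain of the greedy choice. By submodularity the marginal gains of the blocked points and
  of the still eligible ones can thus be charged injectively to the greedy steps, giving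
  \<open>\<Sum>x\<in>Opt - T. g (T \<union> {x}) - g T \<le> g T - g {}\<close>, hence \<open>g Opt \<le> 2 g T\<close>.\<close>

definition marginal :: "('a set \<Rightarrow> real) \<Rightarrow> 'a set \<Rightarrow> 'a \<Rightarrow> real" where
  "marginal g S x = g (S \<union> {x}) - g S"

definition blocked ::
  "'a set \<Rightarrow> ('a \<Rightarrow> 'a \<Rightarrow> real) \<Rightarrow> real \<Rightarrow> 'a set \<Rightarrow> 'a set \<Rightarrow> 'a set" where
  "blocked V dst d Opt S = Opt - S - cands V dst d S"

lemma dist_set_Un_singleton:
  "dist_set dst v (S \<union> {t}) = min (ereal (dst v t)) (dist_set dst v S)"
  by (simp add: dist_set_def inf_min)

lemma cands_Un_singleton_subset: "cands V dst d (S \<union> {t}) \<subseteq> cands V dst d S"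
  unfolding cands_def dist_set_Un_singleton by (auto intro: order.trans)

lemma dist_lt_if_leaves_cands:
  assumes "x \<in> cands V dst d S" and "x \<notin> cands V dst d (S \<union> {t})" and "x \<noteq> t"
  shows "dst x t < d"
  using assms unfolding cands_def dist_set_Un_singleton by (auto simp: min_def split: if_splits)

lemma diversity_le_dist:
  assumes "finite S" and "u \<in> S" and "v \<in> S" and "u \<noteq> v"
  shows "diversity V dst S \<le> dst u v"
proof -
  have "card {u, v} \<le> card S" using assms by (intro card_mono) auto
  hence "card S \<ge> 2" using assms(4) by simp
  moreover have "finite {dst u v | u v. u \<in> S \<and> v \<in> S \<and> u \<noteq> v}"
    by (rule finite_subset[of _ "(\<lambda>(u, v). dst u v) ` (S \<times> S)"]) (use assms(1) in auto)
  ultimately show ?thesis using assms by (auto simp: diversity_def intro: Min_le)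
qed

lemma unique_close_point:
  assumes "metric_on V dst" and "Opt \<subseteq> V" and "finite Opt" and "diversity V dst Opt \<ge> d"
    and "d' < d / 2" and "t \<in> V" and "n1 \<in> Opt" and "n2 \<in> Opt"
    and "dst n1 t < d'" and "dst n2 t < d'"
  shows "n1 = n2"
proof (rule ccontr)
  assume "n1 \<noteq> n2"
  hence "d \<le> dst n1 n2" using diversity_le_dist assms(3,4,7,8) by (metis order.trans)
  also have "\<dots> \<le> dst n1 t + dst n2 t"
    using assms(1,2,6-8) unfolding metric_on_def by (metis subsetD)
  finally show False using assms(5,9,10) by linarith
qed

lemma blocked_mono_step:
  assumes "t \<in> cands V dst d S"
  shows "blocked V dst d Opt S \<subseteq> blocked V dst d Opt (S \<union> {t})"
  using assms cands_Un_singleton_subset[of V dst d S t] unfolding blocked_def by blast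

lemma newly_blocked_close:
  assumes "x \<in> blocked V dst d Opt (S \<union> {t}) - blocked V dst d Opt S"
  shows "x \<in> cands V dst d S \<and> dst x t < d"
  using assms dist_lt_if_leaves_cands[of x V dst d S t] unfolding blocked_def by auto

lemma card_blocked_step:
  assumes "finite Opt" and "t \<in> V" and t: "t \<in> cands V dst d S"
    and sep: "\<forall>t\<in>V. \<forall>n1\<in>Opt. \<forall>n2\<in>Opt. dst n1 t < d \<longrightarrow> dst n2 t < d \<longrightarrow> n1 = n2"
  shows "card (blocked V dst d Opt (S \<union> {t})) \<le> Suc (card (blocked V dst d Opt S))"
proof -
  let ?B = "blocked V dst d Opt S" and ?B' = "blocked V dst d Opt (S \<union> {t})"
  have "x = y" if "x \<in> ?B' - ?B" "y \<in> ?B' - ?B" for x y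
    using newly_blocked_close[OF that(1)] newly_blocked_close[OF that(2)] that sep assms(2)
    by (auto simp: blocked_def)
  hence "card (?B' - ?B) \<le> 1"
    using card_le_Suc0_iff_eq[of "?B' - ?B"] assms(1) by (auto simp: blocked_def)
  moreover have "?B' = ?B \<union> (?B' - ?B)" using blocked_mono_step[OF t] by blast
  ultimately show ?thesis using card_Un_le[of ?B "?B' - ?B"] by simp
qed

lemma sum_marginal_antimono:
  assumes "submodular V g" and "S \<subseteq> S'" and "S' \<subseteq> V" and "W \<subseteq> V - S'"
  shows "(\<Sum>x\<in>W. marginal g S' x) \<le> (\<Sum>x\<in>W. marginal g S x)"
  using assms unfolding submodular_def marginal_def by (intro sum_mono) blast

lemma submodular_le_sum_marginal:
  assumes "submodular V g" and "finite Y" and "Y \<subseteq> V - T" and "T \<subseteq> V"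
  shows "g (T \<union> Y) \<le> g T + (\<Sum>x\<in>Y. marginal g T x)"
  using assms(2,3)
proof (induction Y rule: finite_induct)
  case (insert y Y)
  have "g (T \<union> Y \<union> {y}) - g (T \<union> Y) \<le> marginal g T y"
    using assms(1)[unfolded submodular_def, rule_format, of T "T \<union> Y" y] assms(4) insert
    by (auto simp: marginal_def)
  moreover have "T \<union> insert y Y = T \<union> Y \<union> {y}" by auto
  ultimately show ?case using insert by simp
qed simp

text \<open>The point w is the one whose marginal gain is charged to the greedy choice t.\<close>

lemma greedy_step_sum_bound:
  assumes sub: "submodular V g"
    and "S \<subseteq> V" and t: "t \<in> cands V dst d S"
    and greedy: "\<forall>v\<in>cands V dst d S. marginal g S v \<le> marginal g S t"
    and W: "finite W" "W \<subseteq> V - (S \<union> {t})"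
    and w: "w \<in> W \<inter> cands V dst d S"
    and IH: "(\<Sum>x\<in>W - {w}. marginal g S x) \<le> g S - g {}"
  shows "(\<Sum>x\<in>W. marginal g (S \<union> {t}) x) \<le> g (S \<union> {t}) - g {}"
proof -
  have SV: "S \<union> {t} \<subseteq> V" using assms(2) t by (auto simp: cands_def)
  have "(\<Sum>x\<in>W. marginal g (S \<union> {t}) x)
      = marginal g (S \<union> {t}) w + (\<Sum>x\<in>W - {w}. marginal g (S \<union> {t}) x)"
    using W(1) w by (simp add: sum.remove)
  also have "\<dots> \<le> marginal g S w + (\<Sum>x\<in>W - {w}. marginal g S x)"
    using sum_marginal_antimono[OF sub _ SV, of S "{w}"] sum_marginal_antimono[OF sub _ SV, of S "W - {w}"]
      W(2) w by (intro add_mono) auto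
  also have "\<dots> \<le> marginal g S t + (g S - g {})"
    using greedy w IH by (intro add_mono) auto
  finally show ?thesis by (simp add: marginal_def)
qed

lemma greedy_reach_invariant:
  assumes "greedy_reach V g dst d k i S"
    and "finite V" and "Opt \<subseteq> V"
    and mono: "monotone_set_fun V g" and sub: "submodular V g"
    and sep: "\<forall>t\<in>V. \<forall>n1\<in>Opt. \<forall>n2\<in>Opt. dst n1 t < d \<longrightarrow> dst n2 t < d \<longrightarrow> n1 = n2"
  shows "S \<subseteq> V \<and> card (blocked V dst d Opt S) \<le> i \<and>
    (\<forall>W. blocked V dst d Opt S \<subseteq> W \<longrightarrow> W \<subseteq> Opt - S \<longrightarrow> card W \<le> i \<longrightarrow>
      (\<Sum>x\<in>W. marginal g S x) \<le> g S - g {})"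
  using assms(1)
proof (induction rule: greedy_reach.induct)
  case start
  have "blocked V dst d Opt {} = {}" using assms(3) by (auto simp: blocked_def cands_def dist_set_def)
  moreover have "(\<Sum>x\<in>W. marginal g {} x) \<le> 0" if "W \<subseteq> Opt" "card W \<le> 0" for W
    using that assms(2,3) by (metis card_0_eq finite_subset le_zero_eq order_refl sum.empty)
  ultimately show ?case by auto
next
  case (step i S t)
  let ?B = "blocked V dst d Opt S" and ?B' = "blocked V dst d Opt (S \<union> {t})"
  have SV: "S \<subseteq> V" and cardB: "card ?B \<le> i"
    and IH: "\<And>W. ?B \<subseteq> W \<Longrightarrow> W \<subseteq> Opt - S \<Longrightarrow> card W \<le> i \<Longrightarrow> (\<Sum>x\<in>W. marginal g S x) \<le> g S - g {}"
    using step.IH by auto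
  have t: "t \<in> V" "t \<notin> S" using step.hyps(3) by (auto simp: cands_def)
  have greedy: "\<forall>v\<in>cands V dst d S. marginal g S v \<le> marginal g S t"
    using step.hyps(4) by (simp add: marginal_def)
  have finO: "finite Opt" using assms(2,3) finite_subset by blast
  have BB': "?B \<subseteq> ?B'" using blocked_mono_step[OF step.hyps(3)] .
  have "card ?B' \<le> Suc (card ?B)"
    using card_blocked_step[OF finO t(1) step.hyps(3) sep] .
  hence cardB': "card ?B' \<le> Suc i" using cardB by simp
  have bound: "(\<Sum>x\<in>W. marginal g (S \<union> {t}) x) \<le> g (S \<union> {t}) - g {}"
    if W: "?B' \<subseteq> W" "W \<subseteq> Opt - (S \<union> {t})" "card W \<le> Suc i" for W
  proof -
    have finW: "finite W" using W(2) finO finite_subset by blast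
    have WV: "W \<subseteq> V - (S \<union> {t})" using W(2) assms(3) by blast
    show ?thesis
    proof (cases "W = ?B")
      case True
      have "(\<Sum>x\<in>W. marginal g (S \<union> {t}) x) \<le> (\<Sum>x\<in>W. marginal g S x)"
        using sum_marginal_antimono[OF sub _ _ WV] SV t by auto
      also have "\<dots> \<le> g S - g {}" using IH[of W] True cardB W(2) by auto
      also have "g S \<le> g (S \<union> {t})"
        using mono[unfolded monotone_set_fun_def, rule_format, of S "S \<union> {t}"] SV t by auto
      finally show ?thesis by simp
    next
      case False
      obtain w where w: "w \<in> W - ?B" "?B \<subseteq> W - {w}"
      proof (cases "?B' - ?B = {}")
        case True
        then show ?thesis using that False W(1) BB' by blast
      next
        case False
        then obtain n where "n \<in> ?B' - ?B" by blast
        then show ?thesis using that[of n] W(1) BB' by blast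
      qed
      have "w \<in> cands V dst d S" using w W(2) by (auto simp: blocked_def)
      moreover have "(\<Sum>x\<in>W - {w}. marginal g S x) \<le> g S - g {}"
        by (rule IH) (use w W(2,3) in auto)
      ultimately show ?thesis
        using greedy_step_sum_bound[OF sub SV step.hyps(3) greedy finW WV] w by blast
    qed
  qed
  show ?case using SV t cardB' bound by auto
qed

theorem lemma3p2:
  fixes V :: "'a set" and dst :: "'a \<Rightarrow> 'a \<Rightarrow> real" and g :: "'a set \<Rightarrow> real"
    and k :: nat and d d' :: real and Sopt T :: "'a set"
  assumes "finite V"
    and "metric_on V dst"
    and "nonneg_set_fun V g" and "monotone_set_fun V g" and "submodular V g"
    and "k \<ge> 1"
    and "d > 0"
    and "Sopt \<subseteq> V" and "card Sopt \<le> k" and "diversity V dst Sopt \<ge> d"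
    and "\<forall>S. S \<subseteq> V \<and> card S \<le> k \<and> diversity V dst S \<ge> d \<longrightarrow> g S \<le> g Sopt"
    and "0 \<le> d'" and "d' < d / 2"
    and "greedy_output V g dst d' k T"
  shows "g T \<ge> g Sopt / 2"
proof -
  have finO: "finite Sopt" using assms(1,8) finite_subset by blast
  have sep: "\<forall>t\<in>V. \<forall>n1\<in>Sopt. \<forall>n2\<in>Sopt. dst n1 t < d' \<longrightarrow> dst n2 t < d' \<longrightarrow> n1 = n2"
    using unique_close_point[OF assms(2,8) finO assms(10,13)] by blast
  obtain i where reach: "greedy_reach V g dst d' k i T"
    and stop: "i = k \<or> cands V dst d' T = {}"
    using assms(14) unfolding greedy_output_def by blast
  note inv = greedy_reach_invariant[OF reach assms(1,8,4,5) sep]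
  have "card (Sopt - T) \<le> i"
    using stop inv card_mono[OF finO, of "Sopt - T"] assms(9) by (auto simp: blocked_def)
  hence gain: "(\<Sum>x\<in>Sopt - T. marginal g T x) \<le> g T - g {}"
    using inv by (auto simp: blocked_def)
  have "g Sopt \<le> g (T \<union> (Sopt - T))"
    using assms(4,8) inv unfolding monotone_set_fun_def by auto
  also have "\<dots> \<le> g T + (\<Sum>x\<in>Sopt - T. marginal g T x)"
    using submodular_le_sum_marginal[OF assms(5), of "Sopt - T" T] finO inv assms(8) by auto
  finally show ?thesis using gain assms(3) unfolding nonneg_set_fun_def by force
qed

end
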